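(* Let $i<n$ be positive integers with $n\equiv\pm1\pmod i$ and let $g:=e^{-Z}e^{-X}\exp\big(-\sum_{1\le k<i}\binom{i}{k}E_{ki}\big)\in SL_n$. Then all entries of the matrix $g$ are integers.
   Context: Work over a field of characteristic $0$. $e_{jk}$ is the $n\times n$ matrix unit, with $e_{jk}:=0$ if $j$ or $k\notin[1,n]$; $p\bmod q\in[0,q-1]$. $\epsilon:=1$ if $n\bmod i=1$, else $\epsilon:=-1$; $c_k:=\lfloor(n-k)/i\rfloor$, $a_k:=\epsilon((-nk)\bmod i)$. For $k,\ell\in\mathbb{Z}$, $\xi_{k\ell}:=\sum_{p\in\mathbb{Z}}e_{k+ip,\ell+ip}$, and $E_{k\ell}:=\xi_{k+1,\ell+1}$ if $n\bmod i=1$, $E_{k\ell}:=-\xi_{i-\ell,i-k}$ otherwise. $X:=\sum_{1\le j\le n-i}c_je_{j,j+i}$ and $Z:=\sum_{1\le j<i}a_j\xi_{j+1,j}$. *)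

theory Defs
  imports "Jordan_Normal_Form.Matrix"
begin

(* Matrices are n x n JNF matrices; the paper's 1-based indices j,k correspond to
   JNF 0-based entries (j-1,k-1). Indices in the paper's formulas are integers. *)

definition matsum :: "nat \<Rightarrow> ('b \<Rightarrow> 'a::comm_monoid_add mat) \<Rightarrow> 'b set \<Rightarrow> 'a mat" where
  "matsum n F S = mat n n (\<lambda>rc. \<Sum>j\<in>S. F j $$ rc)"

(* exponential of a nilpotent n x n matrix (A^n = 0, so the series is this finite sum) *)
definition nil_exp :: "nat \<Rightarrow> 'a::field_char_0 mat \<Rightarrow> 'a mat" where
  "nil_exp n A = matsum n (\<lambda>m. (1 / of_nat (fact m)) \<cdot>\<^sub>m (A ^\<^sub>m m)) {..n}"

(* matrix unit e_{jk} (1-based), zero if j or k not in [1,n] *)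
definition unitm :: "nat \<Rightarrow> int \<Rightarrow> int \<Rightarrow> 'a::{zero,one} mat" where
  "unitm n j k = mat n n (\<lambda>(r,c). if int r + 1 = j \<and> int c + 1 = k then 1 else 0)"

(* xi_{kl} = sum_{p in Z} e_{k+ip, l+ip}  (the summands are distinct units since i > 0) *)
definition xi :: "nat \<Rightarrow> nat \<Rightarrow> int \<Rightarrow> int \<Rightarrow> 'a::{zero,one} mat" where
  "xi n i k l = mat n n (\<lambda>(r,c).
      if (\<exists>p::int. int r + 1 = k + int i * p \<and> int c + 1 = l + int i * p) then 1 else 0)"

definition epsi :: "nat \<Rightarrow> nat \<Rightarrow> int" where
  "epsi n i = (if n mod i = 1 then 1 else -1)"

definition cc :: "nat \<Rightarrow> nat \<Rightarrow> int \<Rightarrow> int" where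
  "cc n i k = (int n - k) div int i"

definition aa :: "nat \<Rightarrow> nat \<Rightarrow> int \<Rightarrow> int" where
  "aa n i k = epsi n i * ((- int n * k) mod int i)"

definition EE :: "nat \<Rightarrow> nat \<Rightarrow> int \<Rightarrow> int \<Rightarrow> 'a::comm_ring_1 mat" where
  "EE n i k l = (if n mod i = 1 then xi n i (k + 1) (l + 1) else - xi n i (int i - l) (int i - k))"

definition XX :: "nat \<Rightarrow> nat \<Rightarrow> 'a::comm_ring_1 mat" where
  "XX n i = matsum n (\<lambda>j. of_int (cc n i j) \<cdot>\<^sub>m unitm n j (j + int i)) {1 .. int n - int i}"

definition ZZ :: "nat \<Rightarrow> nat \<Rightarrow> 'a::comm_ring_1 mat" where
  "ZZ n i = matsum n (\<lambda>j. of_int (aa n i j) \<cdot>\<^sub>m xi n i (j + 1) j) {1 ..< int i}"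

definition SS :: "nat \<Rightarrow> nat \<Rightarrow> 'a::comm_ring_1 mat" where
  "SS n i = matsum n (\<lambda>k. of_nat (i choose nat k) \<cdot>\<^sub>m EE n i k (int i)) {1 ..< int i}"

definition gmat :: "nat \<Rightarrow> nat \<Rightarrow> 'a::field_char_0 mat" where
  "gmat n i = nil_exp n (- ZZ n i) * nil_exp n (- XX n i) * nil_exp n (- SS n i)"

end

theory Submission
  imports Defs
begin

(* Each factor of g has integral entries. -X is a weighted shift by i whose weight
   -floor((n-k)/i) grows by one from each row to the row i further down, and -Z is a
   weighted subdiagonal shift whose weights grow by one between consecutive multiples
   of i and vanish at them (this is where n = +-1 mod i enters). Hence every entry of
   (-X)^m and (-Z)^m is either 0 or a rising factorial z (z+1) ... (z+m-1) of an integer,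
   and dividing it by m! gives a binomial coefficient. Finally S has integral entries
   and S^2 = 0, so exp(-S) = 1 - S. *)

lemma gbinomial_of_int_in_Ints: "((of_int z :: 'a::field_char_0) gchoose m) \<in> \<int>"
proof (cases "z \<ge> 0")
  case True
  then have "(of_int z :: 'a) = of_nat (nat z)" by simp
  then show ?thesis by (simp add: binomial_gbinomial[symmetric])
next
  case False
  then have "(of_nat m - of_int z - 1 :: 'a) = of_nat (nat (int m - z - 1))" by simp
  then show ?thesis by (subst gbinomial_negated_upper) (simp add: binomial_gbinomial[symmetric])
qed

lemma pochhammer_of_int_div_fact_in_Ints: "pochhammer (of_int z :: 'a::field_char_0) m / fact m \<in> \<int>"
  using gbinomial_of_int_in_Ints[of "z + int m - 1" m, where 'a='a]
  by (simp add: gbinomial_pochhammer')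

lemma index_mult_mat_sum:
  assumes "A \<in> carrier_mat n n" "B \<in> carrier_mat n n" "r < n" "c < n"
  shows "(A * B) $$ (r,c) = (\<Sum>k<n. A $$ (r,k) * B $$ (k,c))"
  using assms by (simp add: scalar_prod_def lessThan_atLeast0 mult.commute)

definition integral_mat :: "'a::ring_1 mat \<Rightarrow> bool" where
  "integral_mat A \<longleftrightarrow> (\<forall>r<dim_row A. \<forall>c<dim_col A. A $$ (r,c) \<in> \<int>)"

lemma integral_mat_mult:
  assumes "integral_mat A" "integral_mat B" "dim_col A = dim_row B"
  shows "integral_mat (A * B)"
  using assms unfolding integral_mat_def
  by (auto simp: scalar_prod_def intro!: Ints_sum Ints_mult)

lemma carrier_nil_exp: "nil_exp n A \<in> carrier_mat n n"
  unfolding nil_exp_def matsum_def by simp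

lemma integral_mat_nil_exp:
  assumes A: "A \<in> carrier_mat n n"
    and pow: "\<And>m r c. r < n \<Longrightarrow> c < n \<Longrightarrow> (A ^\<^sub>m m) $$ (r,c) / fact m \<in> \<int>"
  shows "integral_mat (nil_exp n (A :: 'a::field_char_0 mat))"
  unfolding integral_mat_def nil_exp_def matsum_def
  using A by (auto intro!: Ints_sum simp: pow[simplified])

lemma pow_mat_eq_zero_if_mult_self_eq_zero:
  assumes "A * A = 0\<^sub>m n n" "A \<in> carrier_mat n n"
  shows "A ^\<^sub>m Suc (Suc m) = 0\<^sub>m n n"
  using assms by (induction m) auto

lemma integral_mat_nil_exp_if_mult_self_eq_zero:
  assumes A: "A \<in> carrier_mat n n" and sq: "A * A = 0\<^sub>m n n" and "integral_mat A"
  shows "integral_mat (nil_exp n (A :: 'a::field_char_0 mat))"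
proof (rule integral_mat_nil_exp[OF A])
  fix m r c assume rc: "r < n" "c < n"
  consider "m = 0" | "m = 1" | m' where "m = Suc (Suc m')" by (metis One_nat_def not0_implies_Suc)
  then show "(A ^\<^sub>m m) $$ (r,c) / fact m \<in> \<int>"
    by cases (use A rc \<open>integral_mat A\<close> pow_mat_eq_zero_if_mult_self_eq_zero[OF sq A]
               in \<open>auto simp: integral_mat_def\<close>)
qed

lemma mult_self_eq_zero_if_support_crossing:
  assumes A: "A \<in> carrier_mat n n"
    and supp: "\<And>r c. r < n \<Longrightarrow> c < n \<Longrightarrow> A $$ (r,c) \<noteq> 0 \<Longrightarrow> P c \<and> \<not> P r"
  shows "A * A = 0\<^sub>m n n"
proof (rule eq_matI)
  fix r c assume rc: "r < dim_row (0\<^sub>m n n :: 'a mat)" "c < dim_col (0\<^sub>m n n :: 'a mat)"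
  have "A $$ (r,k) * A $$ (k,c) = 0" if "k < n" for k
    using supp[of r k] supp[of k c] that rc by force
  then show "(A * A) $$ (r,c) = 0\<^sub>m n n $$ (r,c)"
    using A rc by (simp del: index_mult_mat add: index_mult_mat_sum)
qed (use A in auto)

lemma upper_shift_mat_pow:
  assumes A: "A \<in> carrier_mat n n"
    and w: "\<And>r c. r < n \<Longrightarrow> c < n \<Longrightarrow> A $$ (r,c) = (if c = r + d then w r else 0)"
  shows "r < n \<Longrightarrow> c < n \<Longrightarrow>
    (A ^\<^sub>m m) $$ (r,c) = (if c = r + m * d then (\<Prod>t<m. w (r + t * d)) else 0)"
proof (induction m arbitrary: r c)
  case 0
  then show ?case using A by simp
next
  case (Suc m)
  have "(A ^\<^sub>m Suc m) $$ (r,c) = (\<Sum>k<n. (A ^\<^sub>m m) $$ (r,k) * A $$ (k,c))"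
    using Suc.prems A by (simp del: index_mult_mat add: index_mult_mat_sum)
  also have "\<dots> = (\<Sum>k<n. if k = r + m * d then
      (if c = r + m * d + d then (\<Prod>t<m. w (r + t * d)) * w (r + m * d) else 0) else 0)"
    by (rule sum.cong) (use Suc w in auto)
  also have "\<dots> = (if c = r + Suc m * d then (\<Prod>t<Suc m. w (r + t * d)) else 0)"
    using Suc.prems by (auto simp: add.assoc)
  finally show ?case .
qed

lemma lower_shift_mat_pow:
  assumes A: "A \<in> carrier_mat n n"
    and w: "\<And>r c. r < n \<Longrightarrow> c < n \<Longrightarrow> A $$ (r,c) = (if r = c + 1 then w c else 0)"
  shows "r < n \<Longrightarrow> c < n \<Longrightarrow>
    (A ^\<^sub>m m) $$ (r,c) = (if r = c + m then (\<Prod>t<m. w (c + t)) else 0)"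
proof (induction m arbitrary: r c)
  case 0
  then show ?case using A by simp
next
  case (Suc m)
  have "(A ^\<^sub>m Suc m) $$ (r,c) = (\<Sum>k<n. (A ^\<^sub>m m) $$ (r,k) * A $$ (k,c))"
    using Suc.prems A by (simp del: index_mult_mat add: index_mult_mat_sum)
  also have "\<dots> = (\<Sum>k<n. if k = c + 1 then
      (if r = c + 1 + m then (\<Prod>t<m. w (c + 1 + t)) * w c else 0) else 0)"
    by (rule sum.cong) (use Suc w in auto)
  also have "\<dots> = (if r = c + Suc m then (\<Prod>t<Suc m. w (c + t)) else 0)"
    using Suc.prems
    by (auto simp del: prod.lessThan_Suc simp add: prod.lessThan_Suc_shift mult.commute)
  finally show ?case .
qed

lemma carrier_XX: "XX n i \<in> carrier_mat n n"
  unfolding XX_def matsum_def by simp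

lemma index_XX:
  assumes "r < n" "c < n"
  shows "(XX n i :: 'a::comm_ring_1 mat) $$ (r,c) = (if c = r + i then of_int (cc n i (int r + 1)) else 0)"
proof -
  have "(XX n i :: 'a mat) $$ (r,c) =
      (\<Sum>j\<in>{1 .. int n - int i}. of_int (cc n i j) * (unitm n j (j + int i) :: 'a mat) $$ (r,c))"
    using assms unfolding XX_def matsum_def unitm_def by simp
  also have "\<dots> = (\<Sum>j\<in>{1 .. int n - int i}.
      if j = int r + 1 then (if c = r + i then of_int (cc n i (int r + 1)) else 0) else 0)"
    by (rule sum.cong) (use assms in \<open>auto simp: unitm_def\<close>)
  also have "\<dots> = (if c = r + i then of_int (cc n i (int r + 1)) else 0)"
    using assms by auto
  finally show ?thesis .
qed

lemma cc_add_mult: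
  assumes "0 < i"
  shows "cc n i (k + t * int i) = cc n i k - t"
proof -
  have "cc n i (k + t * int i) = ((int n - k) + (- t) * int i) div int i"
    unfolding cc_def by (simp add: algebra_simps)
  also have "\<dots> = (int n - k) div int i - t"
    using div_mult_self1[of "int i" "int n - k" "- t"] assms by simp
  finally show ?thesis
    unfolding cc_def .
qed

lemma integral_mat_nil_exp_XX:
  assumes "0 < i"
  shows "integral_mat (nil_exp n (- XX n i :: 'a::field_char_0 mat))"
proof (rule integral_mat_nil_exp)
  show XC: "- XX n i \<in> carrier_mat n n" using carrier_XX by (rule uminus_carrier_mat)
  fix m r c assume rc: "r < n" "c < n"
  let ?w = "\<lambda>r. - (of_int (cc n i (int r + 1)) :: 'a)"
  have pow: "(- XX n i ^\<^sub>m m) $$ (r,c) = (if c = r + m * i then (\<Prod>t<m. ?w (r + t * i)) else 0)"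
    by (rule upper_shift_mat_pow[OF XC _ rc]) (auto simp: index_XX carrier_matD[OF carrier_XX])
  have "?w (r + t * i) = of_int (- cc n i (int r + 1)) + of_nat t" for t
  proof -
    have "int (r + t * i) + 1 = int r + 1 + int t * int i" by simp
    then have "cc n i (int (r + t * i) + 1) = cc n i (int r + 1) - int t"
      using cc_add_mult[OF assms] by metis
    then show ?thesis by simp
  qed
  then have "(\<Prod>t<m. ?w (r + t * i)) = pochhammer (of_int (- cc n i (int r + 1))) m"
    by (simp add: pochhammer_prod atLeast0LessThan)
  with pow show "((- XX n i :: 'a mat) ^\<^sub>m m) $$ (r,c) / fact m \<in> \<int>"
    using pochhammer_of_int_div_fact_in_Ints[of "- cc n i (int r + 1)" m, where 'a='a] by simp
qed

lemma aa_dvd: "int i dvd k \<Longrightarrow> aa n i k = 0"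
  unfolding aa_def by auto

lemma aa_mod: "aa n i (k mod int i) = aa n i k"
  unfolding aa_def by (metis minus_mult_left mod_mult_right_eq)

lemma aa_eq_if_mod_eq_one:
  assumes "n mod i = 1"
  shows "aa n i k = (- k) mod int i"
proof -
  have "int n mod int i = 1" using assms by (metis of_nat_1 of_nat_mod)
  then have "(- int n) mod int i = (- 1) mod int i" by (metis mod_minus_eq)
  then have "(- int n * k) mod int i = (- k) mod int i"
    by (metis mod_mult_left_eq mult_minus1)
  then show ?thesis
    unfolding aa_def epsi_def using assms by simp
qed

lemma aa_eq_if_cong_minus_one:
  assumes "n mod i \<noteq> 1" and "int n mod int i = (- 1) mod int i"
  shows "aa n i k = - (k mod int i)"
proof -
  have "(- int n) mod int i = 1 mod int i" using assms(2) by (metis minus_minus mod_minus_eq)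
  then have "(- int n * k) mod int i = k mod int i"
    by (metis mod_mult_left_eq mult_1)
  then show ?thesis
    unfolding aa_def epsi_def using assms by simp
qed

lemma aa_add_one:
  assumes i: "0 < i"
    and hyp: "int n mod int i = 1 mod int i \<or> int n mod int i = (- 1) mod int i"
    and k: "\<not> int i dvd k" "\<not> int i dvd (k + 1)"
  shows "aa n i (k + 1) = aa n i k - 1"
proof (cases "n mod i = 1")
  case True
  have "(- k) mod int i \<noteq> 0" using k(1) by (simp add: mod_eq_0_iff_dvd)
  moreover have "0 \<le> (- k) mod int i" "(- k) mod int i < int i" using i by simp_all
  moreover have "(- (k + 1)) mod int i = ((- k) mod int i - 1) mod int i"
    by (simp add: mod_diff_left_eq)
  ultimately have "(- (k + 1)) mod int i = (- k) mod int i - 1"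
    by (simp add: mod_pos_pos_trivial)
  then show ?thesis using aa_eq_if_mod_eq_one[OF True] by simp
next
  case False
  have "int n mod int i = (- 1) mod int i"
  proof (cases "i = 1")
    case False
    with i \<open>n mod i \<noteq> 1\<close> have "int n mod int i \<noteq> 1 mod int i"
      by (simp add: of_nat_mod[symmetric])
    with hyp show ?thesis by blast
  qed simp
  note aa = aa_eq_if_cong_minus_one[OF False this]
  have "k mod int i + 1 \<noteq> int i"
    using k(2) by (metis mod_add_left_eq mod_eq_0_iff_dvd mod_self)
  moreover have "0 \<le> k mod int i" "k mod int i < int i" using i by simp_all
  moreover have "(k + 1) mod int i = (k mod int i + 1) mod int i" by (simp add: mod_add_left_eq)
  ultimately have "(k + 1) mod int i = k mod int i + 1"
    by (simp add: mod_pos_pos_trivial)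
  then show ?thesis using aa by simp
qed

lemma aa_add_of_nat:
  assumes i: "0 < i"
    and hyp: "int n mod int i = 1 mod int i \<or> int n mod int i = (- 1) mod int i"
    and nondvd: "\<forall>t<m. \<not> int i dvd (k + int t)"
  shows "t < m \<Longrightarrow> aa n i (k + int t) = aa n i k - int t"
proof (induction t)
  case (Suc t)
  have "\<not> int i dvd (k + int t)" "\<not> int i dvd (k + int t + 1)"
    using nondvd Suc.prems by (auto dest: spec[of _ "Suc t"] simp: ac_simps)
  then have "aa n i (k + int t + 1) = aa n i (k + int t) - 1"
    by (rule aa_add_one[OF i hyp])
  then show ?case using Suc by (simp add: ac_simps)
qed simp

lemma carrier_ZZ: "ZZ n i \<in> carrier_mat n n"
  unfolding ZZ_def matsum_def by simp

lemma index_ZZ: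
  assumes i: "0 < i" and rc: "r < n" "c < n"
  shows "(ZZ n i :: 'a::comm_ring_1 mat) $$ (r,c) = (if r = c + 1 then of_int (aa n i (int c + 1)) else 0)"
proof -
  let ?k = "(int c + 1) mod int i"
  have xi: "(xi n i (j + 1) j :: 'a mat) $$ (r,c) = (if j = ?k \<and> r = c + 1 then 1 else 0)"
    if j: "j \<in> {1..<int i}" for j
  proof -
    have "(\<exists>p. int r + 1 = j + 1 + int i * p \<and> int c + 1 = j + int i * p) \<longleftrightarrow> (j = ?k \<and> r = c + 1)"
    proof
      assume "\<exists>p. int r + 1 = j + 1 + int i * p \<and> int c + 1 = j + int i * p"
      then obtain p where p: "int r + 1 = j + 1 + int i * p" "int c + 1 = j + int i * p" by blast
      have "?k = j mod int i" using p(2) by simp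
      also have "\<dots> = j" using j by (intro mod_pos_pos_trivial) auto
      finally show "j = ?k \<and> r = c + 1" using p by simp
    next
      assume "j = ?k \<and> r = c + 1"
      then show "\<exists>p. int r + 1 = j + 1 + int i * p \<and> int c + 1 = j + int i * p"
        by (intro exI[of _ "(int c + 1) div int i"])
           (simp add: mod_div_mult_eq[symmetric, of "int c + 1" "int i"] algebra_simps)
    qed
    then show ?thesis using rc unfolding xi_def by auto
  qed
  have "(ZZ n i :: 'a mat) $$ (r,c) = (\<Sum>j\<in>{1..<int i}. of_int (aa n i j) * (xi n i (j + 1) j :: 'a mat) $$ (r,c))"
    using rc unfolding ZZ_def matsum_def xi_def by simp
  also have "\<dots> = (\<Sum>j\<in>{1..<int i}. if j = ?k then (if r = c + 1 then of_int (aa n i ?k) else 0) else 0)"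
    by (rule sum.cong) (auto simp: xi)
  also have "\<dots> = (if r = c + 1 then of_int (aa n i (int c + 1)) else 0)"
  proof (cases "?k = 0")
    case True
    then have "aa n i (int c + 1) = 0" by (intro aa_dvd) (simp add: mod_eq_0_iff_dvd)
    then show ?thesis using True by simp
  next
    case False
    moreover have "0 \<le> ?k" "?k < int i" using i by simp_all
    ultimately show ?thesis by (simp add: aa_mod)
  qed
  finally show ?thesis .
qed

lemma integral_mat_nil_exp_ZZ:
  assumes i: "0 < i"
    and hyp: "int n mod int i = 1 mod int i \<or> int n mod int i = (- 1) mod int i"
  shows "integral_mat (nil_exp n (- ZZ n i :: 'a::field_char_0 mat))"
proof (rule integral_mat_nil_exp)
  show ZC: "- ZZ n i \<in> carrier_mat n n" using carrier_ZZ by (rule uminus_carrier_mat)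
  fix m r c assume rc: "r < n" "c < n"
  let ?w = "\<lambda>c. - (of_int (aa n i (int c + 1)) :: 'a)"
  let ?z = "- aa n i (int c + 1)"
  have pow: "((- ZZ n i :: 'a mat) ^\<^sub>m m) $$ (r,c) = (if r = c + m then (\<Prod>t<m. ?w (c + t)) else 0)"
    by (rule lower_shift_mat_pow[OF ZC _ rc]) (auto simp: index_ZZ[OF i] carrier_matD[OF carrier_ZZ])
  have shift: "int (c + t) + 1 = int c + 1 + int t" for t by simp
  have "(\<Prod>t<m. ?w (c + t)) = 0 \<or> (\<Prod>t<m. ?w (c + t)) = pochhammer (of_int ?z) m"
  proof (cases "\<exists>t<m. int i dvd (int c + 1 + int t)")
    case True
    then obtain t where "t < m" "int i dvd (int c + 1 + int t)" by blast
    then have "?w (c + t) = 0" using aa_dvd by (simp only: shift) simp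
    with \<open>t < m\<close> have "(\<Prod>t<m. ?w (c + t)) = 0" by (intro prod_zero) auto
    then show ?thesis ..
  next
    case False
    then have "?w (c + t) = of_int ?z + of_nat t" if "t < m" for t
      using aa_add_of_nat[OF i hyp, of m "int c + 1" t] that by (simp only: shift) simp
    then show ?thesis by (simp add: pochhammer_prod atLeast0LessThan)
  qed
  with pow show "((- ZZ n i :: 'a mat) ^\<^sub>m m) $$ (r,c) / fact m \<in> \<int>"
    using pochhammer_of_int_div_fact_in_Ints[of ?z m, where 'a='a] by (auto simp del: prod_zero_iff)
qed

(* S maps the coordinates in this set to coordinates outside it and kills the others. *)
definition SS_domain_index :: "nat \<Rightarrow> nat \<Rightarrow> nat \<Rightarrow> bool" where
  "SS_domain_index n i c \<longleftrightarrow> (if n mod i = 1 then int i dvd int c else \<not> int i dvd (int c + 1))"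

lemma index_EE_in_Ints:
  assumes "r < n" "c < n"
  shows "(EE n i k l :: 'a::comm_ring_1 mat) $$ (r,c) \<in> \<int>"
  using assms unfolding EE_def xi_def by auto

lemma index_EE_neq_zero:
  assumes k: "k \<in> {1..<int i}" and rc: "r < n" "c < n"
    and nz: "(EE n i k (int i) :: 'a::comm_ring_1 mat) $$ (r,c) \<noteq> 0"
  shows "SS_domain_index n i c \<and> \<not> SS_domain_index n i r"
proof -
  have k_nondvd: "\<not> int i dvd k" using k zdvd_imp_le[of "int i" k] by auto
  show ?thesis
  proof (cases "n mod i = 1")
    case True
    then obtain p where p: "int r + 1 = k + 1 + int i * p" "int c + 1 = int i + 1 + int i * p"
      using nz rc unfolding EE_def xi_def by (auto split: if_splits)
    then have "int c = int i * (p + 1)" "int r = k + int i * p" by (simp_all add: algebra_simps)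
    then show ?thesis
      using True k_nondvd unfolding SS_domain_index_def by (auto simp: dvd_add_left_iff)
  next
    case False
    then obtain p where p: "int r + 1 = int i * p" "int c + 1 = int i * p - k + int i"
      using nz rc unfolding EE_def xi_def by (auto split: if_splits simp: algebra_simps)
    then have "int c + 1 = int i * (p + 1) - k" by (simp add: algebra_simps)
    then show ?thesis
      using p(1) False k_nondvd unfolding SS_domain_index_def
      by (auto simp: dvd_diff_right_iff dvd_add_left_iff)
  qed
qed

lemma carrier_EE: "EE n i k l \<in> carrier_mat n n"
  unfolding EE_def xi_def by simp

lemma carrier_SS: "SS n i \<in> carrier_mat n n"
  unfolding SS_def matsum_def by simp

lemma index_SS:
  assumes "r < n" "c < n"
  shows "(SS n i :: 'a::comm_ring_1 mat) $$ (r,c) =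
    (\<Sum>k\<in>{1..<int i}. of_nat (i choose nat k) * (EE n i k (int i) :: 'a mat) $$ (r,c))"
  using assms unfolding SS_def matsum_def by (simp add: carrier_matD[OF carrier_EE])

lemma uminus_SS_mult_self_eq_zero:
  "(- SS n i :: 'a::comm_ring_1 mat) * - SS n i = 0\<^sub>m n n"
proof (rule mult_self_eq_zero_if_support_crossing)
  show "- SS n i \<in> carrier_mat n n" using carrier_SS by (rule uminus_carrier_mat)
  fix r c assume rc: "r < n" "c < n" and "(- SS n i :: 'a mat) $$ (r,c) \<noteq> 0"
  then have "(\<Sum>k\<in>{1..<int i}. of_nat (i choose nat k) * (EE n i k (int i) :: 'a mat) $$ (r,c)) \<noteq> 0"
    by (simp add: index_SS carrier_matD[OF carrier_SS])
  then obtain k where "k \<in> {1..<int i}" "(EE n i k (int i) :: 'a mat) $$ (r,c) \<noteq> 0"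
    by (metis (no_types, lifting) mult_zero_right sum.neutral)
  then show "SS_domain_index n i c \<and> \<not> SS_domain_index n i r"
    using index_EE_neq_zero rc by blast
qed

lemma integral_mat_nil_exp_SS:
  "integral_mat (nil_exp n (- SS n i :: 'a::field_char_0 mat))"
proof (rule integral_mat_nil_exp_if_mult_self_eq_zero[OF _ uminus_SS_mult_self_eq_zero])
  show "- SS n i \<in> carrier_mat n n" using carrier_SS by (rule uminus_carrier_mat)
  then show "integral_mat (- SS n i :: 'a mat)"
    unfolding integral_mat_def
    by (auto simp: index_SS carrier_matD[OF carrier_SS] intro!: Ints_sum Ints_mult index_EE_in_Ints)
qed

theorem proposition4p5:
  fixes n i :: nat
  assumes "0 < i" and "i < n"
    and "int n mod int i = 1 mod int i \<or> int n mod int i = (-1) mod int i"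
  shows "\<forall>r<n. \<forall>c<n. (gmat n i :: 'a::field_char_0 mat) $$ (r, c) \<in> \<int>"
proof -
  have "integral_mat (gmat n i :: 'a mat)"
    unfolding gmat_def
    using integral_mat_nil_exp_ZZ[OF assms(1,3)] integral_mat_nil_exp_XX[OF assms(1)]
      integral_mat_nil_exp_SS
    by (auto intro!: integral_mat_mult simp: carrier_matD[OF carrier_nil_exp])
  then show ?thesis
    unfolding integral_mat_def gmat_def by (simp add: carrier_matD[OF carrier_nil_exp])
qed

end
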